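(* Let $q$ be a fixed prime power and $0<k<n$. Given an integer $i$ with $0\le i<\left[\begin{smallmatrix} n\\ k\end{smallmatrix}\right]_q$, Encoding Algorithm C (which produces the subspace $X\in\mathcal{G}_q(n,k)$ with $\mathrm{Ind}_{\mathcal{F}}(X)=i$) can be carried out with $O(k^{5/2}(n-k)^{5/2})$ operations on $q$-ary digits.
   Context: $\mathcal{G}_q(n,k)$ is the set of $k$-dimensional subspaces of $\mathbb{F}_q^n$ (field elements identified with $\mathbb{Z}_q$); $\left[\begin{smallmatrix} n\\ k\end{smallmatrix}\right]_q=\prod_{i=0}^{k-1}\frac{q^{n-i}-1}{q^{k-i}-1}$. A subspace $X$ is described by its Ferrers tableaux form $\mathcal{F}(X)$: from the unique $k\times n$ reduced row echelon matrix whose rows span $X$, delete in each row the leading one and everything to its left, and delete the columns containing leading ones, right-justifying the remaining entries. Its Ferrers diagram $\mathcal{F}_X$ (dots in place of entries) is represented as $(\mathcal{F}_{n-k},\dots,\mathcal{F}_1)$, $\mathcal{F}_i$ = number of dots in the $i$-th column from the right, $0\le\mathcal{F}_{i+1}\le\mathcal{F}_i\le k$; $|\mathcal{F}_X|$ is the number of dots. The entries vector $x$ lists entries of $\mathcal{F}(X)$ right to left, top to bottom, $\{x\}=\sum_t x_tq^{|\mathcal{F}_X|-t}$. $p(a,\eta,s)$ is the number of partitions of $s$ fitting in an $a\times\eta$ box; $\alpha_s=p(k,n-k,s)$. Among diagrams of size $m$, $\mathcal{F}<\widetilde{\mathcal{F}}$ if $\mathcal{F}_i>\widetilde{\mathcal{F}}_i$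 at the least $i$ where they differ; $\mathrm{ind}_m(\mathcal{F})$ is the number of size-$m$ diagrams in a $k\times(n-k)$ box preceding $\mathcal{F}$, and $\mathrm{ind}_m^{-1}$ is its inverse, computed by Algorithm B: with $N_m(\mathcal{F}_j,\dots,\mathcal{F}_1)=p(\mathcal{F}_j,n-k-j,m-\sum_{t\le j}\mathcal{F}_t)$ and $\mathcal{F}_0=k$, $h=$ given index, for $j=1,\dots,n-k$: if $\sum_{t<j}\mathcal{F}_t=m$ set $\mathcal{F}_j=0$; otherwise set $\ell=0$ and while $h\ge N_m(\mathcal{F}_{j-1}-\ell,\mathcal{F}_{j-1},\dots,\mathcal{F}_1)$ replace $h$ by $h-N_m(\mathcal{F}_{j-1}-\ell,\mathcal{F}_{j-1},\dots,\mathcal{F}_1)$ and $\ell$ by $\ell+1$; then set $\mathcal{F}_j=\mathcal{F}_{j-1}-\ell$. Encoding Algorithm C: set $i_0=i$; for $j=0,\dots,k(n-k)$, with $m=k(n-k)-j$: if $i_j<\alpha_mq^m$, set $|\mathcal{F}_X|=m$, $\mathcal{F}_X=\mathrm{ind}_m^{-1}(\lfloor i_j/q^m\rfloor)$, let $x$ be the base-$q$ representation (length $m$) of $i_j-\lfloor i_j/q^m\rfloor q^m$, and stop; otherwise set $i_{j+1}=i_j-\alpha_mq^m$. Complexity counts operations on $q$-ary digits; multiplication by $q^i$ is a shift. *)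

theory Defs
  imports Complex_Main "HOL-Computational_Algebra.Primes"
begin

definition prime_power :: "nat \<Rightarrow> bool" where
  "prime_power q \<longleftrightarrow> (\<exists>p r. prime p \<and> r > 0 \<and> q = p ^ r)"

definition qbinom :: "nat \<Rightarrow> nat \<Rightarrow> nat \<Rightarrow> real" where
  "qbinom q n k = (\<Prod>i<k. (real q ^ (n - i) - 1) / (real q ^ (k - i) - 1))"

(* p(a,eta,s): partitions of s into at most eta parts, each part at most a
   (i.e. fitting in a box); partitions padded with zeros to length eta.
   Negative s gives 0. *)
definition pcount :: "nat \<Rightarrow> nat \<Rightarrow> int \<Rightarrow> nat" where
  "pcount a eta s = (if s < 0 then 0 else
     card {xs :: nat list. length xs = eta \<and> sorted xs \<and> (\<forall>x\<in>set xs. x \<le> a)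
                           \<and> sum_list xs = nat s})"

(* cost model: number of q-ary digits of a number; an operation (add, subtract,
   compare, read) on numbers costs the number of q-ary digits involved *)
definition dlen :: "nat \<Rightarrow> nat \<Rightarrow> nat" where
  "dlen q x = max 1 (LEAST d. x < q ^ d)"

definition cop :: "nat \<Rightarrow> nat \<Rightarrow> nat \<Rightarrow> nat" where
  "cop q x y = max (dlen q x) (dlen q y)"

(* Algorithm B, inner while-loop over l (bounded by prev+1 iterations);
   returns (l, h, cost) *)
fun algB_inner :: "nat \<Rightarrow> nat \<Rightarrow> nat \<Rightarrow> nat \<Rightarrow> nat \<Rightarrow> nat \<Rightarrow> nat \<Rightarrow> nat \<Rightarrow> nat \<Rightarrow> nat
                   \<Rightarrow> nat \<times> nat \<times> nat" where
  "algB_inner q n k m j S prev h l 0 = (l, h, 0)"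
| "algB_inner q n k m j S prev h l (Suc f) =
    (let a = prev - l;
         N = pcount a (n - k - j) (int m - int (S + a));
         c0 = cop q l prev + cop q S a + cop q (S + a) m + dlen q N + cop q h N
     in if N \<le> h then
          (case algB_inner q n k m j S prev (h - N) (Suc l) f of
             (l', h', c) \<Rightarrow> (l', h', c0 + cop q h N + cop q l 1 + c))
        else (l, h, c0))"

(* Algorithm B, outer loop over j = 1..n-k; S = sum of F_t for t<j, prev = F_{j-1};
   returns (F_1..F_{n-k}, cost) *)
fun algB_outer :: "nat \<Rightarrow> nat \<Rightarrow> nat \<Rightarrow> nat \<Rightarrow> nat \<Rightarrow> nat \<Rightarrow> nat \<Rightarrow> nat \<Rightarrow> nat \<Rightarrow> nat list
                   \<Rightarrow> nat list \<times> nat" where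
  "algB_outer q n k m j 0 S prev h Fs = (Fs, 0)"
| "algB_outer q n k m j (Suc r) S prev h Fs =
    (let c0 = cop q S m in
     if S = m then
       (case algB_outer q n k m (Suc j) r S 0 h (Fs @ [0]) of
          (Fs', c) \<Rightarrow> (Fs', c0 + cop q j 1 + c))
     else
       (case algB_inner q n k m j S prev h 0 (Suc prev) of
          (l, h', c1) \<Rightarrow>
            (let Fj = prev - l in
             (case algB_outer q n k m (Suc j) r (S + Fj) Fj h' (Fs @ [Fj]) of
                (Fs', c) \<Rightarrow> (Fs', c0 + c1 + cop q prev l + cop q S Fj + cop q j 1 + c)))))"

(* ind_m^{-1}(h) with cost; F_0 = k *)
definition algB :: "nat \<Rightarrow> nat \<Rightarrow> nat \<Rightarrow> nat \<Rightarrow> nat \<Rightarrow> nat list \<times> nat" where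
  "algB q n k m h = algB_outer q n k m 1 (n - k) 0 k h []"

(* Algorithm C main loop (j = 0..k(n-k)); returns (Ferrers diagram, |F_X|,
   entries vector x (most significant digit first), cost) *)
fun algC_loop :: "nat \<Rightarrow> nat \<Rightarrow> nat \<Rightarrow> nat \<Rightarrow> nat \<Rightarrow> nat
                  \<Rightarrow> nat list \<times> nat \<times> nat list \<times> nat" where
  "algC_loop q n k i j 0 = ([], 0, [], 0)"
| "algC_loop q n k i j (Suc f) =
    (let m = k * (n - k) - j;
         A = pcount k (n - k) (int m) * q ^ m;
         c0 = cop q (k * (n - k)) j + dlen q A + cop q i A
     in if i < A then
          (let h = i div q ^ m;
               r = i mod q ^ m;
               x = map (\<lambda>t. r div q ^ (m - 1 - t) mod q) [0..<m];
               (Fs, cB) = algB q n k m h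
           in (Fs, m, x, c0 + dlen q i + dlen q i + m + cB))
        else
          (case algC_loop q n k (i - A) (Suc j) f of
             (Fs, m', x, c) \<Rightarrow> (Fs, m', x, c0 + cop q i A + cop q j 1 + c)))"

(* cost of precomputing the table of p(a,eta,s), a<=k, eta<=n-k, s<=k(n-k),
   via the recurrence p(a,eta,s) = p(a-1,eta,s) + p(a,eta-1,s-a):
   one addition per entry, costing the number of digits of the result *)
definition table_cost :: "nat \<Rightarrow> nat \<Rightarrow> nat \<Rightarrow> nat" where
  "table_cost q n k = (\<Sum>a\<le>k. \<Sum>eta\<le>n - k. \<Sum>s\<le>k * (n - k). dlen q (pcount a eta (int s)))"

definition encode_cost :: "nat \<Rightarrow> nat \<Rightarrow> nat \<Rightarrow> nat \<Rightarrow> nat" where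
  "encode_cost q n k i =
     table_cost q n k + snd (snd (snd (algC_loop q n k i 0 (k * (n - k) + 1))))"

end

theory Submission
  imports Defs
begin

text \<open>Write \<open>T = k(n - k)\<close>. All counters, indices and partial sums handled by the algorithms
  are at most \<open>2T + 1\<close>, and the input satisfies \<open>i < q\<^sup>2\<^sup>T\<close>, so each of them has \<open>O(T)\<close>
  \<open>q\<close>-ary digits. The partition numbers are bounded by
  \<open>binom(k + (n - k), k) \<le> exp(3 sqrt T)\<close>, so they have only \<open>O(sqrt T)\<close> digits. Precomputing
  their table takes \<open>O(T\<^sup>2)\<close> additions of such numbers, i.e. \<open>O(T\<^sup>5\<^sup>/\<^sup>2)\<close> digit operations, while
  the at most \<open>T + 1\<close> rounds of Algorithm C and the at most \<open>(n - k)(k + 1)\<close> rounds of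
  Algorithm B cost \<open>O(T)\<close> each.\<close>

lemma power_div_fact_le_exp:
  assumes "0 \<le> (x::real)" shows "x ^ n / fact n \<le> exp x"
proof -
  have s: "(\<lambda>n. x ^ n / fact n) sums exp x"
    using exp_converges[of x] by (simp add: divide_inverse mult.commute scaleR_conv_of_real)
  have "sum (\<lambda>n. x ^ n / fact n) {n} \<le> suminf (\<lambda>n. x ^ n / fact n)"
    by (rule sum_le_suminf) (use s assms in \<open>auto simp: sums_iff\<close>)
  then show ?thesis using s by (simp add: sums_iff)
qed

lemma sqrt_ratio_mult:
  assumes "0 < (s::real)" "0 \<le> L" shows "s * sqrt (L / s) = sqrt (s * L)"
proof -
  have "sqrt (s * L) = sqrt (s * s * (L / s))" using assms by simp
  also have "\<dots> = s * sqrt (L / s)" using assms by (simp only: real_sqrt_mult) simp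
  finally show ?thesis ..
qed

lemma binomial_le_exp_sqrt_aux:
  assumes "s \<le> L"
  shows "real ((L + s) choose s) \<le> exp (3 * sqrt (real s * real L))"
proof (cases "s = 0")
  case False
  then have sp: "0 < real s" by simp
  define x where "x = real L / real s"
  have x0: "0 \<le> x" by (simp add: x_def)
  have "real ((L + s) choose s) * fact s \<le> real (L + s) ^ s"
    using binomial_fact_pow[of "L + s" s] by (metis of_nat_fact of_nat_le_iff of_nat_mult of_nat_power)
  then have "real ((L + s) choose s) \<le> real (L + s) ^ s / fact s"
    by (simp add: field_simps)
  also have "\<dots> = (1 + x) ^ s * (real s ^ s / fact s)"
    using sp by (simp add: x_def power_divide field_simps)
  also have "\<dots> \<le> exp (2 * sqrt x) ^ s * exp (real s)"
  proof (intro mult_mono power_mono)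
    \<comment> \<open>\<open>1 + x \<le> (1 + sqrt x)\<^sup>2\<close> gives a bound with \<open>sqrt x\<close> rather than \<open>x\<close> in the exponent.\<close>
    have "1 + x \<le> (1 + sqrt x)\<^sup>2"
      using sp by (simp add: x_def power2_eq_square algebra_simps)
    also have "\<dots> \<le> (exp (sqrt x))\<^sup>2"
      using x0 by (intro power_mono) auto
    finally show "1 + x \<le> exp (2 * sqrt x)"
      by (simp add: power2_eq_square exp_add[symmetric])
    show "real s ^ s / fact s \<le> exp (real s)" by (rule power_div_fact_le_exp) simp
  qed (use sp in \<open>auto simp: x_def\<close>)
  also have "\<dots> = exp (2 * sqrt (real s * real L) + real s)"
    using sqrt_ratio_mult[OF sp, of "real L"]
    by (simp add: x_def exp_add exp_of_nat_mult[symmetric] algebra_simps)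
  also have "\<dots> \<le> exp (3 * sqrt (real s * real L))"
  proof -
    have "real s = sqrt (real s * real s)" by simp
    also have "\<dots> \<le> sqrt (real s * real L)"
      using assms by (intro real_sqrt_le_mono mult_left_mono) auto
    finally show ?thesis by simp
  qed
  finally show ?thesis .
qed simp

lemma binomial_le_exp_sqrt:
  "real ((K + E) choose K) \<le> exp (3 * sqrt (real K * real E))"
proof (cases "K \<le> E")
  case True
  then show ?thesis using binomial_le_exp_sqrt_aux[of K E] by (simp add: add.commute)
next
  case False
  then show ?thesis using binomial_le_exp_sqrt_aux[of E K] binomial_symmetric[of E "K + E"]
    by (simp add: mult.commute)
qed

definition box_partitions :: "nat \<Rightarrow> nat \<Rightarrow> nat list set" where
  "box_partitions a eta = {xs. length xs = eta \<and> sorted xs \<and> (\<forall>x\<in>set xs. x \<le> a)}"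

lemma finite_box_partitions: "finite (box_partitions a eta)"
proof (rule finite_subset)
  show "box_partitions a eta \<subseteq> {xs. set xs \<subseteq> {..a} \<and> length xs = eta}"
    by (auto simp: box_partitions_def)
qed (rule finite_lists_length_eq, simp)

lemma pcount_le_card_box_partitions: "pcount a eta s \<le> card (box_partitions a eta)"
  using finite_box_partitions[of a eta] unfolding pcount_def box_partitions_def
  by (auto intro!: card_mono)

lemma box_partitions_Suc_Suc_subset:
  "box_partitions (Suc a) (Suc eta)
     \<subseteq> box_partitions a (Suc eta) \<union> (\<lambda>xs. xs @ [Suc a]) ` box_partitions (Suc a) eta"
proof
  fix xs assume xs: "xs \<in> box_partitions (Suc a) (Suc eta)"
  then have len: "length xs = Suc eta" and sorted: "sorted xs" and bounded: "\<forall>x\<in>set xs. x \<le> Suc a"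
    by (auto simp: box_partitions_def)
  then have "xs \<noteq> []" by auto
  show "xs \<in> box_partitions a (Suc eta) \<union> (\<lambda>xs. xs @ [Suc a]) ` box_partitions (Suc a) eta"
  proof (cases "last xs \<le> a")
    case True
    have "sorted (butlast xs @ [last xs])" using sorted \<open>xs \<noteq> []\<close> by simp
    then have "\<forall>x\<in>set (butlast xs @ [last xs]). x \<le> last xs" by (auto simp: sorted_append)
    then have "\<forall>x\<in>set xs. x \<le> last xs" using \<open>xs \<noteq> []\<close> by simp
    then show ?thesis using True len sorted by (auto simp: box_partitions_def)
  next
    case False
    then have "last xs = Suc a"
      using bounded \<open>xs \<noteq> []\<close> last_in_set by fastforce
    then have "xs = butlast xs @ [Suc a]"
      using \<open>xs \<noteq> []\<close> by (metis append_butlast_last_id)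
    moreover have "butlast xs \<in> box_partitions (Suc a) eta"
      using len sorted bounded
      by (auto simp: box_partitions_def sorted_butlast dest: in_set_butlastD)
    ultimately show ?thesis by blast
  qed
qed

lemma box_partitions_zero: "box_partitions 0 eta = {replicate eta 0}"
  by (auto simp: box_partitions_def sorted_iff_nth_mono intro!: replicate_eqI)

lemma card_box_partitions_le: "card (box_partitions a eta) \<le> (a + eta) choose a"
proof (induction eta arbitrary: a)
  case 0
  have "box_partitions a 0 = {[]}" by (auto simp: box_partitions_def)
  then show ?case by simp
next
  case (Suc eta)
  note IH_eta = Suc.IH
  show ?case
  proof (induction a)
    case 0
    then show ?case by (simp add: box_partitions_zero)
  next
    case (Suc a)
    have "card (box_partitions (Suc a) (Suc eta))
        \<le> card (box_partitions a (Suc eta) \<union> (\<lambda>xs. xs @ [Suc a]) ` box_partitions (Suc a) eta)"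
      by (intro card_mono box_partitions_Suc_Suc_subset) (simp add: finite_box_partitions)
    also have "\<dots> \<le> card (box_partitions a (Suc eta)) + card ((\<lambda>xs. xs @ [Suc a]) ` box_partitions (Suc a) eta)"
      by (rule card_Un_le)
    also have "\<dots> \<le> card (box_partitions a (Suc eta)) + card (box_partitions (Suc a) eta)"
      by (intro add_left_mono card_image_le finite_box_partitions)
    also have "\<dots> \<le> ((a + Suc eta) choose a) + ((Suc a + eta) choose (Suc a))"
      using Suc.IH IH_eta[of "Suc a"] by (intro add_mono) (simp_all del: binomial_Suc_Suc)
    also have "\<dots> = (Suc a + Suc eta) choose (Suc a)"
      by simp
    finally show ?case .
  qed
qed

lemma pcount_le_binomial:
  assumes "a \<le> K" "eta \<le> E"
  shows "pcount a eta s \<le> (K + E) choose K"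
proof -
  have "pcount a eta s \<le> (a + eta) choose a"
    using pcount_le_card_box_partitions card_box_partitions_le le_trans by blast
  also have "\<dots> \<le> (a + E) choose a" using assms by (intro binomial_right_mono) simp
  also have "\<dots> = (a + E) choose E" using binomial_symmetric[of a "a + E"] by simp
  also have "\<dots> \<le> (K + E) choose E" using assms by (intro binomial_right_mono) simp
  also have "\<dots> = (K + E) choose K" using binomial_symmetric[of E "K + E"] by simp
  finally show ?thesis .
qed

definition box_digit_bound :: "nat \<Rightarrow> nat \<Rightarrow> nat" where
  "box_digit_bound K E = 2 * nat \<lceil>3 * sqrt (real K * real E)\<rceil> + 1"

lemma pcount_less_power_box_digit_bound:
  assumes q: "2 \<le> q" and "a \<le> K" "eta \<le> E"
  shows "pcount a eta s < q ^ box_digit_bound K E"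
proof -
  define d where "d = nat \<lceil>3 * sqrt (real K * real E)\<rceil>"
  have "real ((K + E) choose K) \<le> exp (real d)"
    using binomial_le_exp_sqrt[of K E] real_nat_ceiling_ge[of "3 * sqrt (real K * real E)"]
    unfolding d_def by (meson exp_le_cancel_iff order_trans)
  also have "\<dots> = exp 1 ^ d" using exp_of_nat_mult[of d 1] by simp
  also have "\<dots> \<le> 4 ^ d" using exp_le by (intro power_mono) auto
  finally have "(K + E) choose K \<le> 4 ^ d"
    by (metis of_nat_le_iff of_nat_numeral of_nat_power)
  also have "(4::nat) ^ d = 2 ^ (2 * d)" by (simp add: power_mult)
  also have "\<dots> < 2 ^ (2 * d + 1)" by simp
  also have "\<dots> \<le> q ^ (2 * d + 1)" using q by (intro power_mono) auto
  finally show ?thesis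
    using pcount_le_binomial[OF assms(2,3), of s] unfolding box_digit_bound_def d_def by simp
qed

lemma box_digit_bound_le:
  assumes "1 \<le> K * E"
  shows "real (box_digit_bound K E) \<le> 9 * sqrt (real K * real E)"
proof -
  have "1 \<le> sqrt (real K * real E)"
    using assms by (simp flip: of_nat_mult)
  moreover have "real (nat \<lceil>3 * sqrt (real K * real E)\<rceil>) = real_of_int \<lceil>3 * sqrt (real K * real E)\<rceil>"
    by simp
  ultimately show ?thesis unfolding box_digit_bound_def by linarith
qed

lemma dlen_le_of_less_power: "x < q ^ d \<Longrightarrow> dlen q x \<le> max 1 d"
  unfolding dlen_def by (intro max.mono order_refl Least_le)

lemma less_power_self: "2 \<le> q \<Longrightarrow> x < q ^ x"
  using less_exp[of x] power_mono[of 2 q x] by linarith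

lemma dlen_le_Suc_self: "2 \<le> q \<Longrightarrow> dlen q x \<le> x + 1"
  using dlen_le_of_less_power[of x q x] less_power_self[of q x] by simp

lemma dlen_mono:
  assumes q: "2 \<le> q" and "x \<le> y" shows "dlen q x \<le> dlen q y"
proof -
  have "y < q ^ (LEAST d. y < q ^ d)" by (rule LeastI[of _ y]) (rule less_power_self[OF q])
  then have "dlen q x \<le> max 1 (LEAST d. y < q ^ d)"
    using \<open>x \<le> y\<close> by (intro dlen_le_of_less_power) simp
  then show ?thesis by (simp add: dlen_def)
qed

lemma cop_le: "dlen q x \<le> W \<Longrightarrow> dlen q y \<le> W \<Longrightarrow> cop q x y \<le> W"
  by (simp add: cop_def)

locale digit_budget =
  fixes q n k W :: nat
  assumes q_ge_2: "2 \<le> q" and k_pos: "0 < k" and k_less_n: "k < n"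
    and small_digits: "\<And>x. x \<le> 2 * (k * (n - k)) + 1 \<Longrightarrow> dlen q x \<le> W"
    and pcount_digits: "\<And>a eta s. a \<le> k \<Longrightarrow> eta \<le> n - k \<Longrightarrow> dlen q (pcount a eta s) \<le> W"
    and block_digits: "\<And>m. m \<le> k * (n - k) \<Longrightarrow> dlen q (pcount k (n - k) (int m) * q ^ m) \<le> W"
begin

lemma algB_inner_cost:
  assumes "prev \<le> k" "S + k \<le> k * (n - k)" "m \<le> k * (n - k)"
  shows "l + f \<le> k + 1 \<Longrightarrow> dlen q h \<le> W \<Longrightarrow>
    (case algB_inner q n k m j S prev h l f of (l', h', c) \<Rightarrow> l' \<le> l + f \<and> h' \<le> h \<and> c \<le> 7 * W * f)"
proof (induction f arbitrary: h l)
  case 0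
  then show ?case by simp
next
  case (Suc f)
  define a where "a = prev - l"
  define N where "N = pcount a (n - k - j) (int m - int (S + a))"
  define c0 where "c0 = cop q l prev + cop q S a + cop q (S + a) m + dlen q N + cop q h N"
  have dN: "dlen q N \<le> W" unfolding N_def a_def using assms by (intro pcount_digits) auto
  have dl: "dlen q l \<le> W" using Suc.prems assms by (intro small_digits) auto
  have "a \<le> k" unfolding a_def using assms by simp
  then have "cop q l prev \<le> W" "cop q S a \<le> W" "cop q (S + a) m \<le> W"
    using assms dl by (auto intro!: cop_le small_digits)
  then have c0: "c0 \<le> 5 * W" unfolding c0_def
    using dN cop_le[OF Suc.prems(2) dN] by linarith
  have dl1: "cop q l 1 \<le> W" using dl by (auto intro!: cop_le small_digits)
  have dhN: "cop q h N \<le> W" using Suc.prems(2) dN by (rule cop_le)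
  show ?case
  proof (cases "N \<le> h")
    case True
    have dh': "dlen q (h - N) \<le> W" using dlen_mono[OF q_ge_2, of "h - N" h] Suc.prems(2) by simp
    obtain l' h' c where rec: "algB_inner q n k m j S prev (h - N) (Suc l) f = (l', h', c)"
      by (metis prod_cases3)
    have "l' \<le> Suc l + f \<and> h' \<le> h - N \<and> c \<le> 7 * W * f"
      using Suc.IH[of "Suc l" "h - N"] Suc.prems dh' rec by simp
    then show ?thesis using True rec c0 dl1 dhN
      unfolding algB_inner.simps Let_def a_def[symmetric] N_def[symmetric] c0_def[symmetric]
      by auto
  next
    case False
    then show ?thesis using c0
      unfolding algB_inner.simps Let_def a_def[symmetric] N_def[symmetric] c0_def[symmetric]
      by simp
  qed
qed

lemma algB_outer_cost:
  assumes m: "m \<le> k * (n - k)"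
  shows "S + r * k \<le> k * (n - k) \<Longrightarrow> prev \<le> k \<Longrightarrow> j + r \<le> n - k + 1 \<Longrightarrow> dlen q h \<le> W \<Longrightarrow>
    snd (algB_outer q n k m j r S prev h Fs) \<le> r * (5 * W + 7 * W * (k + 1))"
proof (induction r arbitrary: j S prev h Fs)
  case 0
  then show ?case by simp
next
  case (Suc r)
  have "n - k \<le> k * (n - k)" using k_pos by simp
  then have "j \<le> k * (n - k)" using Suc.prems(3) by linarith
  then have dj: "cop q j 1 \<le> W" by (auto intro!: cop_le small_digits)
  have dSm: "cop q S m \<le> W" using Suc.prems m by (auto intro!: cop_le small_digits)
  show ?case
  proof (cases "S = m")
    case True
    obtain Fs' c where rec: "algB_outer q n k m (Suc j) r S 0 h (Fs @ [0]) = (Fs', c)"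
      by (metis prod.exhaust)
    have "c \<le> r * (5 * W + 7 * W * (k + 1))"
      using Suc.IH[of S 0 "Suc j" h "Fs @ [0]"] Suc.prems rec by simp
    then show ?thesis using True rec dj dSm by (simp add: Let_def)
  next
    case False
    obtain l h' c1 where inner: "algB_inner q n k m j S prev h 0 (Suc prev) = (l, h', c1)"
      by (metis prod_cases3)
    have "l \<le> Suc prev \<and> h' \<le> h \<and> c1 \<le> 7 * W * Suc prev"
      using algB_inner_cost[of prev S m 0 "Suc prev" h j] Suc.prems m inner by auto
    moreover have "7 * W * Suc prev \<le> 7 * W * (k + 1)" using Suc.prems(2) by simp
    ultimately have l: "l \<le> Suc prev" and h': "h' \<le> h" and c1: "c1 \<le> 7 * W * (k + 1)"
      by linarith+
    define Fj where "Fj = prev - l"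
    have Fj: "Fj \<le> k" using Suc.prems(2) unfolding Fj_def by simp
    obtain Fs' c where rec: "algB_outer q n k m (Suc j) r (S + Fj) Fj h' (Fs @ [Fj]) = (Fs', c)"
      by (metis prod.exhaust)
    have dh': "dlen q h' \<le> W" using dlen_mono[OF q_ge_2 h'] Suc.prems(4) by simp
    have "c \<le> r * (5 * W + 7 * W * (k + 1))"
      using Suc.IH[of "S + Fj" Fj "Suc j" h' "Fs @ [Fj]"] Suc.prems rec Fj dh' by simp
    moreover have "cop q prev l \<le> W" "cop q S Fj \<le> W"
      using Suc.prems l Fj by (auto intro!: cop_le small_digits)
    ultimately show ?thesis using False rec inner dj dSm c1
      by (simp add: Let_def Fj_def[symmetric])
  qed
qed

lemma algB_cost:
  assumes "m \<le> k * (n - k)" "dlen q h \<le> W"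
  shows "snd (algB q n k m h) \<le> (n - k) * (5 * W + 7 * W * (k + 1))"
  unfolding algB_def
  by (rule algB_outer_cost) (use assms in \<open>auto simp: mult.commute\<close>)

lemma algC_loop_cost:
  "j + f \<le> k * (n - k) + 1 \<Longrightarrow> dlen q i \<le> W \<Longrightarrow>
    snd (snd (snd (algC_loop q n k i j f)))
      \<le> f * (5 * W) + k * (n - k) + (n - k) * (5 * W + 7 * W * (k + 1))"
proof (induction f arbitrary: i j)
  case 0
  then show ?case by simp
next
  case (Suc f)
  define m where "m = k * (n - k) - j"
  define A where "A = pcount k (n - k) (int m) * q ^ m"
  define c0 where "c0 = cop q (k * (n - k)) j + dlen q A + cop q i A"
  have dA: "dlen q A \<le> W" unfolding A_def m_def by (intro block_digits) simp
  have diA: "cop q i A \<le> W" using Suc.prems(2) dA by (rule cop_le)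
  have "cop q (k * (n - k)) j \<le> W" using Suc.prems by (auto intro!: cop_le small_digits)
  then have c0: "c0 \<le> 3 * W" unfolding c0_def using dA diA by simp
  have dj: "cop q j 1 \<le> W" using Suc.prems by (auto intro!: cop_le small_digits)
  show ?case
  proof (cases "i < A")
    case True
    define h where "h = i div q ^ m"
    have "dlen q h \<le> W" using dlen_mono[OF q_ge_2, of h i] Suc.prems(2) unfolding h_def by simp
    then have cB: "snd (algB q n k m h) \<le> (n - k) * (5 * W + 7 * W * (k + 1))"
      by (intro algB_cost) (simp add: m_def)
    obtain Fs cB' where B: "algB q n k m h = (Fs, cB')" by (metis prod.exhaust)
    have "m \<le> k * (n - k)" unfolding m_def by simp
    then show ?thesis using True c0 cB B Suc.prems(2)
      unfolding algC_loop.simps Let_def m_def[symmetric] A_def[symmetric] c0_def[symmetric] h_def[symmetric]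
      by (simp add: split_beta)
  next
    case False
    have di: "dlen q (i - A) \<le> W" using dlen_mono[OF q_ge_2, of "i - A" i] Suc.prems(2) by simp
    obtain Fs m' x c where rec: "algC_loop q n k (i - A) (Suc j) f = (Fs, m', x, c)"
      by (metis prod_cases4)
    have "c \<le> f * (5 * W) + k * (n - k) + (n - k) * (5 * W + 7 * W * (k + 1))"
      using Suc.IH[of "Suc j" "i - A"] Suc.prems di rec by simp
    then show ?thesis using False c0 diA dj rec
      unfolding algC_loop.simps Let_def m_def[symmetric] A_def[symmetric] c0_def[symmetric]
      by simp
  qed
qed

lemma algC_cost:
  assumes "dlen q i \<le> W"
  shows "snd (snd (snd (algC_loop q n k i 0 (k * (n - k) + 1)))) \<le> 30 * (k * (n - k)) * W"
proof -
  define T where "T = k * (n - k)"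
  have T: "1 \<le> T" "k \<le> T" "n - k \<le> T" using k_pos k_less_n by (auto simp: T_def)
  have W: "1 \<le> W" using small_digits[of 0] by (simp add: dlen_def)
  have "(T + 1) * (5 * W) \<le> 10 * T * W" using T by simp
  moreover have "T \<le> T * W" using W by simp
  moreover have "(n - k) * (5 * W + 7 * W * (k + 1)) \<le> 19 * T * W"
  proof -
    have "(n - k) * (5 * W + 7 * W * (k + 1)) = 12 * (n - k) * W + 7 * T * W"
      by (simp add: T_def algebra_simps)
    also have "\<dots> \<le> 12 * T * W + 7 * T * W" using T by simp
    finally show ?thesis by simp
  qed
  ultimately show ?thesis
    using algC_loop_cost[of 0 "T + 1" i] assms unfolding T_def by linarith
qed

end

lemma qbinom_le_power:
  assumes q: "2 \<le> q" and kn: "k \<le> n"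
  shows "qbinom q n k \<le> real q ^ (k * (n - k + 1))"
proof -
  have "qbinom q n k \<le> (\<Prod>i<k. real q ^ (n - k + 1))"
    unfolding qbinom_def
  proof (rule prod_mono, rule conjI)
    fix i assume i: "i \<in> {..<k}"
    define y where "y = real q ^ (k - i)"
    have "real q ^ 1 \<le> y"
      unfolding y_def using q i by (intro power_increasing) auto
    then have y2: "2 \<le> y" using q by simp
    have qE: "1 \<le> real q ^ (n - k)" using q by (simp add: one_le_power)
    have num: "real q ^ (n - i) = real q ^ (n - k) * y"
      using i kn unfolding y_def by (simp flip: power_add)
    have "y \<le> real q ^ (n - k) * y"
      using mult_right_mono[OF qE, of y] y2 by simp
    then show "0 \<le> (real q ^ (n - i) - 1) / (real q ^ (k - i) - 1)"
      unfolding num y_def[symmetric] using y2 by (intro divide_nonneg_nonneg) linarith+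
    have "real q ^ (n - k) * y - 1 \<le> real q ^ (n - k + 1) * (y - 1)"
    proof -
      have "y \<le> real q * (y - 1)"
        using y2 q mult_right_mono[of 2 "real q" "y - 1"] by simp
      then have "real q ^ (n - k) * y \<le> real q ^ (n - k) * (real q * (y - 1))"
        using qE by (intro mult_left_mono) auto
      then show ?thesis by (simp add: algebra_simps)
    qed
    then show "(real q ^ (n - i) - 1) / (real q ^ (k - i) - 1) \<le> real q ^ (n - k + 1)"
      unfolding num y_def[symmetric] using y2 by (simp add: divide_le_eq)
  qed
  also have "\<dots> = (real q ^ (n - k + 1)) ^ k" by simp
  also have "\<dots> = real q ^ (k * (n - k + 1))" by (metis power_mult mult.commute)
  finally show ?thesis .
qed

lemma table_cost_le:
  assumes "2 \<le> q"
  shows "table_cost q n k \<le> (k + 1) * (n - k + 1) * (k * (n - k) + 1) * box_digit_bound k (n - k)"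
proof -
  have "table_cost q n k \<le> (\<Sum>a\<le>k. \<Sum>eta\<le>n - k. \<Sum>s\<le>k * (n - k). box_digit_bound k (n - k))"
    unfolding table_cost_def
    using dlen_le_of_less_power[OF pcount_less_power_box_digit_bound[OF assms]]
    by (intro sum_mono) (simp add: box_digit_bound_def)
  also have "\<dots> = (k + 1) * ((n - k + 1) * ((k * (n - k) + 1) * box_digit_bound k (n - k)))"
    by (simp only: sum_constant card_atMost) simp
  finally show ?thesis by (simp only: mult.assoc)
qed

lemma digit_budget_linear:
  assumes q: "2 \<le> q" and "0 < k" "k < n"
  shows "digit_budget q n k (10 * (k * (n - k)))"
proof -
  define T where "T = k * (n - k)"
  define D where "D = box_digit_bound k (n - k)"
  have T1: "1 \<le> T" using assms by (simp add: T_def)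
  have "real D \<le> 9 * sqrt (real T)"
    using box_digit_bound_le[of k "n - k"] T1 by (simp add: D_def T_def)
  also have "\<dots> \<le> 9 * real T"
    using T1 real_sqrt_le_mono[of "real T" "real T * real T"] by simp
  finally have DT: "D \<le> 9 * T" by linarith
  have pc: "pcount a eta s < q ^ D" if "a \<le> k" "eta \<le> n - k" for a eta s
    unfolding D_def using pcount_less_power_box_digit_bound[OF q that] .
  show ?thesis
  proof
    show "dlen q x \<le> 10 * (k * (n - k))" if "x \<le> 2 * (k * (n - k)) + 1" for x
      using that dlen_le_Suc_self[OF q, of x] T1 unfolding T_def by linarith
    show "dlen q (pcount a eta s) \<le> 10 * (k * (n - k))" if "a \<le> k" "eta \<le> n - k" for a eta s
      using dlen_le_of_less_power[OF pc[OF that, of s]] DT T1 unfolding T_def by linarith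
    show "dlen q (pcount k (n - k) (int m) * q ^ m) \<le> 10 * (k * (n - k))" if "m \<le> k * (n - k)" for m
    proof -
      have "pcount k (n - k) (int m) * q ^ m < q ^ (D + m)"
        using pc[of k "n - k" "int m"] q by (simp add: power_add)
      then have "dlen q (pcount k (n - k) (int m) * q ^ m) \<le> max 1 (D + m)"
        by (rule dlen_le_of_less_power)
      moreover have "max 1 (D + m) \<le> 10 * (k * (n - k))"
        using DT T1 that unfolding T_def by simp
      ultimately show ?thesis by (rule order_trans)
    qed
  qed (use assms in auto)
qed

lemma powr_five_halves: "0 \<le> (x::real) \<Longrightarrow> x powr (5/2) = x\<^sup>2 * sqrt x"
  using powr_add[of x 2 "1/2"] by (cases "x = 0") (simp_all add: powr_half_sqrt)

lemma dlen_less_qbinom: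
  assumes q: "2 \<le> q" and "0 < k" "k \<le> n" and i: "real i < qbinom q n k"
  shows "dlen q i \<le> k * (n - k + 1)"
proof -
  have "real i < real q ^ (k * (n - k + 1))"
    by (rule less_le_trans[OF i qbinom_le_power[OF q]]) (use assms in simp)
  then have "i < q ^ (k * (n - k + 1))" by (metis of_nat_less_iff of_nat_power)
  then have "dlen q i \<le> max 1 (k * (n - k + 1))" by (rule dlen_le_of_less_power)
  moreover have "1 \<le> k * (n - k + 1)" using assms by simp
  ultimately show ?thesis by simp
qed

lemma encode_cost_le:
  assumes q: "2 \<le> q" and "0 < k" "k < n" and i: "real i < qbinom q n k"
  shows "encode_cost q n k i
           \<le> 8 * (k * (n - k))\<^sup>2 * box_digit_bound k (n - k) + 300 * (k * (n - k))\<^sup>2"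
proof -
  define T where "T = k * (n - k)"
  interpret digit_budget q n k "10 * T"
    unfolding T_def using digit_budget_linear[OF assms(1-3)] .
  have T1: "1 \<le> T" and "k \<le> T" using assms by (simp_all add: T_def)
  moreover have "k * (n - k + 1) = T + k" by (simp add: T_def)
  ultimately have "dlen q i \<le> 10 * T"
    using dlen_less_qbinom[OF q \<open>0 < k\<close> _ i] \<open>k < n\<close> by linarith
  then have loop: "snd (snd (snd (algC_loop q n k i 0 (T + 1)))) \<le> 300 * T\<^sup>2"
    using algC_cost[of i] by (simp add: T_def power2_eq_square)
  have "(k + 1) * (n - k + 1) \<le> (2 * k) * (2 * (n - k))"
    using assms by (intro mult_le_mono) auto
  also have "\<dots> = 4 * T" by (simp add: T_def)
  finally have "(k + 1) * (n - k + 1) \<le> 4 * T" .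
  moreover have "T + 1 \<le> 2 * T" using T1 by simp
  ultimately have "(k + 1) * (n - k + 1) * (T + 1) \<le> 4 * T * (2 * T)"
    by (rule mult_le_mono)
  then have "(k + 1) * (n - k + 1) * (T + 1) * box_digit_bound k (n - k)
      \<le> 8 * T\<^sup>2 * box_digit_bound k (n - k)"
    by (intro mult_le_mono1) (simp add: power2_eq_square)
  then have "table_cost q n k \<le> 8 * T\<^sup>2 * box_digit_bound k (n - k)"
    using table_cost_le[OF q, of n k] unfolding T_def by linarith
  with loop show ?thesis unfolding encode_cost_def T_def by linarith
qed

lemma encode_cost_le_powr:
  assumes "2 \<le> q" and "0 < k" "k < n" and "real i < qbinom q n k"
  shows "real (encode_cost q n k i) \<le> 372 * real (k * (n - k)) powr (5/2)"
proof -
  define T where "T = k * (n - k)"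
  have "1 \<le> T" using assms by (simp add: T_def)
  then have T1: "1 \<le> sqrt (real T)" by simp
  have "real (encode_cost q n k i) \<le> real (8 * T\<^sup>2 * box_digit_bound k (n - k) + 300 * T\<^sup>2)"
    using encode_cost_le[OF assms] unfolding T_def by (simp only: of_nat_le_iff)
  also have "\<dots> = 8 * real T ^ 2 * real (box_digit_bound k (n - k)) + 300 * real T ^ 2"
    by simp
  also have "\<dots> \<le> 8 * real T ^ 2 * (9 * sqrt (real T)) + 300 * real T ^ 2 * sqrt (real T)"
  proof (intro add_mono mult_left_mono)
    show "real (box_digit_bound k (n - k)) \<le> 9 * sqrt (real T)"
      using box_digit_bound_le[of k "n - k"] assms by (simp add: T_def)
    show "300 * real T ^ 2 \<le> 300 * real T ^ 2 * sqrt (real T)"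
      using T1 by simp
  qed simp
  also have "\<dots> = 372 * real T powr (5/2)"
    using powr_five_halves[of "real T"] by simp
  finally show ?thesis unfolding T_def .
qed

theorem theorem10:
  fixes q :: nat
  assumes "prime_power q"
  shows "\<exists>C::real. \<forall>n k i::nat. 0 < k \<and> k < n \<and> real i < qbinom q n k \<longrightarrow>
           real (encode_cost q n k i) \<le> C * real k powr (5/2) * real (n - k) powr (5/2)"
proof (intro exI[of _ 372] allI impI)
  obtain p r where p: "prime p" and "r > 0" "q = p ^ r"
    using assms unfolding prime_power_def by blast
  then have "p \<le> q" using prime_gt_0_nat[OF p] by (simp add: self_le_power)
  then have q: "2 \<le> q" using prime_ge_2_nat[OF p] by linarith
  fix n k i :: nat
  assume "0 < k \<and> k < n \<and> real i < qbinom q n k"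
  then have "real (encode_cost q n k i) \<le> 372 * real (k * (n - k)) powr (5/2)"
    using encode_cost_le_powr[OF q] by blast
  also have "\<dots> = 372 * real k powr (5/2) * real (n - k) powr (5/2)"
    unfolding of_nat_mult by (subst powr_mult) simp_all
  finally show "real (encode_cost q n k i) \<le> 372 * real k powr (5/2) * real (n - k) powr (5/2)" .
qed

end
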